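(* Let $(a_n)_{n\ge1}$ be real with $|a_n|\le1$, $\gamma_n=\operatorname{sign}(a_n)$, and let $N_1<N_2<\cdots$ be integers with $\lim_{j\to\infty}\frac1{N_j}\sum_{n=1}^{N_j}|a_n|=\theta>0$. For each sufficiently large $j$ let $m=m(j)$ be the unique index with $q_{m+1}/3\le N_j<q_{m+2}/3$, and put $q=q_{m}$, $M=\lfloor N_j/q\rfloor$, $M'=\lfloor qM/(q-1)\rfloor$. Then for all sufficiently large $j$, either there is $c\in\{0,\dots,q-1\}$ with $$A^{q,M}_{c,c}\ge\frac{\theta}{8q},$$ or there is $d\in\{0,\dots,q-2\}$ with $$-A^{q-1,M'}_{d+1,d}\ge\frac{\theta}{8q}.$$
   Context: Fix integers $2\le q_1<q_2<\cdots$ such that $q_{k+1}>q_k^4+3q_k$ for every $k\ge1$. (In the paper's notation, $q=q^{(i')}_{k'}$ where $q^{(0)}_k=q_{2k}$, $q^{(1)}_k=q_{2k+1}$, and $q-1=q^{(i'+2)}_{k'}$.) For integers $q,M\ge1$ and $r,c\ge0$ set $$A^{q,M}_{r,c}=\frac1{qM}\sum_{b=r}^{q-1+r}\sum_{n=1}^M\gamma(qn+c)\,a(qn+b).$$ *)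

theory Defs
  imports "HOL-Analysis.Analysis"
begin

definition gam :: "(nat \<Rightarrow> real) \<Rightarrow> nat \<Rightarrow> real" where
  "gam a n = sgn (a n)"

definition A :: "(nat \<Rightarrow> real) \<Rightarrow> nat \<Rightarrow> nat \<Rightarrow> nat \<Rightarrow> nat \<Rightarrow> real" where
  "A a q M r c = (1 / (real q * real M)) *
     (\<Sum>b = r..q - 1 + r. \<Sum>n = 1..M. gam a (q * n + c) * a (q * n + b))"

end

theory Submission
  imports Defs
begin

text \<open>
  Summing A(q, M; c + s, c) over all residues c and regrouping by x = q n + c gives
  the sum over x of gamma(x) (a(x+s) + ... + a(x+s+q-1)). For (q, s) = (Q, 0) the first window
  term contributes gamma(x) a(x) = |a(x)| and the rest is gamma(x) (a(x+1) + ... + a(x+Q-1));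
  for (q, s) = (Q-1, 1) one gets exactly the same windows, summed over an x-range that differs
  from the first one only at its two ends. Hence the difference of the two scaled diagonal sums is
  at least |a(1)| + ... + |a(N)| - Q^2 > N theta/2 - Q^2, whereas it would be at most N theta/4
  if all the averages were below theta/(8Q). The growth of (q_k) gives Q^4 < 3N, so that
  Q^2 < N theta/4 once N is large, a contradiction.
\<close>

lemma sum_blocks_nat:
  fixes h :: "nat \<Rightarrow> 'a::comm_monoid_add"
  shows "(\<Sum>n = 1..M. \<Sum>c<P. h (P * n + c)) = (\<Sum>x\<in>{P..<P * M + P}. h x)"
proof (induction M)
  case 0
  then show ?case by simp
next
  case (Suc M)
  have "(\<Sum>c<P. h (P * Suc M + c)) = (\<Sum>x\<in>{0 + (P * M + P)..<P + (P * M + P)}. h x)"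
    by (simp only: sum.shift_bounds_nat_ivl atLeast0LessThan) (simp add: ac_simps)
  then have "(\<Sum>n = 1..Suc M. \<Sum>c<P. h (P * n + c))
      = (\<Sum>x\<in>{P..<P * M + P}. h x) + (\<Sum>x\<in>{P * M + P..<P * M + P + P}. h x)"
    using Suc by (simp add: ac_simps)
  also have "\<dots> = (\<Sum>x\<in>{P..<P * M + P + P}. h x)"
    by (rule sum.atLeastLessThan_concat) auto
  finally show ?case by (simp add: ac_simps)
qed

lemma scaled_A_eq_double_sum:
  assumes "1 \<le> q"
  shows "real q * real M * A a q M r c = (\<Sum>b = r..q - 1 + r. \<Sum>n = 1..M. gam a (q * n + c) * a (q * n + b))"
  using assms by (cases "M = 0") (simp_all add: A_def)

lemma A_diagonal_sum:
  assumes "1 \<le> P"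
  shows "real P * real M * (\<Sum>c\<in>{0..P - 1}. A a P M (c + s) c)
       = (\<Sum>x\<in>{P..<P * M + P}. gam a x * (\<Sum>k<P. a (x + s + k)))"
proof -
  have ivl: "{0..P - 1} = {..<P}" using assms by auto
  have window: "(\<Sum>b = c + s..P - 1 + (c + s). f b) = (\<Sum>k<P. f (c + s + k))" for c and f :: "nat \<Rightarrow> real"
    using sum.shift_bounds_cl_nat_ivl[of f 0 "c + s" "P - 1"] unfolding ivl by (simp add: ac_simps)
  have "real P * real M * (\<Sum>c\<in>{0..P - 1}. A a P M (c + s) c)
      = (\<Sum>c<P. \<Sum>k<P. \<Sum>n = 1..M. gam a (P * n + c) * a (P * n + (c + s + k)))"
    by (simp only: sum_distrib_left scaled_A_eq_double_sum[OF assms] window ivl)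
  also have "\<dots> = (\<Sum>n = 1..M. \<Sum>c<P. gam a (P * n + c) * (\<Sum>k<P. a (P * n + c + s + k)))"
    by (subst sum.swap, subst (2) sum.swap) (simp add: sum_distrib_left ac_simps)
  also have "\<dots> = (\<Sum>x\<in>{P..<P * M + P}. gam a x * (\<Sum>k<P. a (x + s + k)))"
    by (rule sum_blocks_nat)
  finally show ?thesis .
qed

lemma abs_sum_le_card_mult:
  fixes F :: "nat \<Rightarrow> real"
  assumes "\<And>x. x \<in> I \<Longrightarrow> \<bar>F x\<bar> \<le> B"
  shows "\<bar>sum F I\<bar> \<le> real (card I) * B"
proof -
  have "\<bar>sum F I\<bar> \<le> (\<Sum>x\<in>I. \<bar>F x\<bar>)" by (rule sum_abs)
  also have "\<dots> \<le> real (card I) * B" by (rule sum_bounded_above) (rule assms)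
  finally show ?thesis .
qed

lemma sum_interval_diff_bound:
  fixes F :: "nat \<Rightarrow> real"
  assumes "u \<le> u'" "u' \<le> v" "v \<le> v'" and bound: "\<And>x. \<bar>F x\<bar> \<le> B"
  shows "\<bar>(\<Sum>x\<in>{u'..<v'}. F x) - (\<Sum>x\<in>{u..<v}. F x)\<bar> \<le> real (u' - u + (v' - v)) * B"
proof -
  have "(\<Sum>x\<in>{u'..<v'}. F x) = (\<Sum>x\<in>{u'..<v}. F x) + (\<Sum>x\<in>{v..<v'}. F x)"
    using assms by (simp add: sum.atLeastLessThan_concat)
  moreover have "(\<Sum>x\<in>{u..<v}. F x) = (\<Sum>x\<in>{u..<u'}. F x) + (\<Sum>x\<in>{u'..<v}. F x)"
    using assms by (simp add: sum.atLeastLessThan_concat)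
  moreover have "\<bar>\<Sum>x\<in>{v..<v'}. F x\<bar> \<le> real (v' - v) * B"
    and "\<bar>\<Sum>x\<in>{u..<u'}. F x\<bar> \<le> real (u' - u) * B"
    using abs_sum_le_card_mult[where F = F and B = B and I = "{v..<v'}"]
      abs_sum_le_card_mult[where F = F and B = B and I = "{u..<u'}"] bound by simp_all
  ultimately show ?thesis by (simp add: algebra_simps)
qed

lemma gam_mult_self: "gam a x * a x = \<bar>a x\<bar>"
  by (simp add: gam_def sgn_if)

lemma abs_gam_le_1: "\<bar>gam a x\<bar> \<le> 1"
  by (simp add: gam_def abs_sgn_eq)

lemma abs_gam_window_le:
  assumes "\<forall>n\<ge>1. \<bar>a n\<bar> \<le> 1"
  shows "\<bar>gam a x * (\<Sum>k<P. a (x + 1 + k))\<bar> \<le> real P"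
proof -
  have "\<bar>\<Sum>k<P. a (x + 1 + k)\<bar> \<le> real P"
    using abs_sum_le_card_mult[of "{..<P}" "\<lambda>k. a (x + 1 + k)" 1] assms by simp
  moreover have "\<bar>gam a x\<bar> * \<bar>\<Sum>k<P. a (x + 1 + k)\<bar> \<le> \<bar>\<Sum>k<P. a (x + 1 + k)\<bar>"
    by (rule mult_left_le_one_le) (simp_all add: abs_gam_le_1)
  ultimately show ?thesis by (simp add: abs_mult)
qed

lemma diagonal_sums_lower_bound:
  fixes a :: "nat \<Rightarrow> real"
  assumes "2 \<le> Q" "Q \<le> N" and abound: "\<forall>n\<ge>1. \<bar>a n\<bar> \<le> 1"
  defines "M \<equiv> N div Q" and "M' \<equiv> Q * (N div Q) div (Q - 1)"
  shows "(\<Sum>n = 1..N. \<bar>a n\<bar>) - real Q ^ 2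
    \<le> real Q * real M * (\<Sum>c\<in>{0..Q - 1}. A a Q M c c)
      - real (Q - 1) * real M' * (\<Sum>d\<in>{0..Q - 2}. A a (Q - 1) M' (d + 1) d)"
proof -
  define P where "P = Q - 1"
  define F where "F x = gam a x * (\<Sum>k<P. a (x + 1 + k))" for x
  have F_bound: "\<bar>F x\<bar> \<le> real P" for x
    unfolding F_def by (rule abs_gam_window_le[OF abound])
  have QP: "Q = Suc P" "1 \<le> P" "Q - 2 = P - 1" using assms(1) by (auto simp: P_def)
  have M: "Q * M \<le> N" "N < Q * M + Q"
    using mult_div_mod_eq[of Q N] mod_less_divisor[of Q N] assms(1) unfolding M_def by linarith+
  have M': "P * M' \<le> Q * M" "Q * M < P * M' + P"
    using mult_div_mod_eq[of P "Q * M"] mod_less_divisor[of P "Q * M"] QP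
    unfolding M'_def P_def M_def[symmetric] by linarith+
  have "1 \<le> M" using M assms(2) by (cases M) auto
  then have "Q \<le> Q * M" by simp
  then have "1 \<le> M'" using M' QP by (cases M') auto
  have first: "real Q * real M * (\<Sum>c\<in>{0..Q - 1}. A a Q M c c)
      = (\<Sum>x\<in>{Q..<Q * M + Q}. \<bar>a x\<bar>) + (\<Sum>x\<in>{Q..<Q * M + Q}. F x)"
  proof -
    have "gam a x * (\<Sum>k<Q. a (x + 0 + k)) = \<bar>a x\<bar> + F x" for x
      unfolding QP(1) sum.lessThan_Suc_shift F_def by (simp add: distrib_left gam_mult_self)
    then show ?thesis
      using A_diagonal_sum[of Q M a 0] assms(1) by (simp add: sum.distrib)
  qed
  have second: "real P * real M' * (\<Sum>d\<in>{0..P - 1}. A a P M' (d + 1) d)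
      = (\<Sum>x\<in>{P..<P * M' + P}. F x)"
    unfolding F_def by (rule A_diagonal_sum[OF QP(2)])
  have "(\<Sum>n = 1..N. \<bar>a n\<bar>) \<le> (\<Sum>x\<in>{1..<Q * M + Q}. \<bar>a x\<bar>)"
    by (rule sum_mono2) (use M in auto)
  also have "\<dots> = (\<Sum>x\<in>{1..<Q}. \<bar>a x\<bar>) + (\<Sum>x\<in>{Q..<Q * M + Q}. \<bar>a x\<bar>)"
    by (rule sum.atLeastLessThan_concat[symmetric]) (use assms(1) in auto)
  also have "(\<Sum>x\<in>{1..<Q}. \<bar>a x\<bar>) \<le> real P"
    using sum_bounded_above[of "{1..<Q}" "\<lambda>x. \<bar>a x\<bar>" 1] abound QP(1) by simp
  finally have head: "(\<Sum>n = 1..N. \<bar>a n\<bar>) \<le> real P + (\<Sum>x\<in>{Q..<Q * M + Q}. \<bar>a x\<bar>)"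
    by simp
  have "\<bar>(\<Sum>x\<in>{Q..<Q * M + Q}. F x) - (\<Sum>x\<in>{P..<P * M' + P}. F x)\<bar>
      \<le> real (Q - P + (Q * M + Q - (P * M' + P))) * real P"
    by (rule sum_interval_diff_bound[OF _ _ _ F_bound]) (use QP M' \<open>1 \<le> M'\<close> in auto)
  also have "\<dots> \<le> real Q * real P"
  proof -
    have "Q - P + (Q * M + Q - (P * M' + P)) \<le> Q" using QP M' by linarith
    then show ?thesis by (simp add: mult_right_mono)
  qed
  finally have tail: "\<bar>(\<Sum>x\<in>{Q..<Q * M + Q}. F x) - (\<Sum>x\<in>{P..<P * M' + P}. F x)\<bar>
      \<le> real Q * real P" .
  have "real P + real Q * real P \<le> real Q ^ 2"
    using QP(1) by (simp add: power2_eq_square algebra_simps)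
  then show ?thesis
    using first second head tail unfolding QP(3) P_def[symmetric] by linarith
qed

lemma diagonal_averages_dichotomy:
  fixes a :: "nat \<Rightarrow> real"
  assumes "2 \<le> Q" "Q \<le> N" and abound: "\<forall>n\<ge>1. \<bar>a n\<bar> \<le> 1"
    and small: "real Q ^ 2 < real N * \<theta> / 4"
    and dense: "real N * \<theta> / 2 < (\<Sum>n = 1..N. \<bar>a n\<bar>)"
  defines "M \<equiv> N div Q" and "M' \<equiv> Q * (N div Q) div (Q - 1)"
  shows "(\<exists>c\<in>{0..Q - 1}. A a Q M c c \<ge> \<theta> / (8 * real Q)) \<or>
    (\<exists>d\<in>{0..Q - 2}. - A a (Q - 1) M' (d + 1) d \<ge> \<theta> / (8 * real Q))"
proof (rule ccontr)
  assume fails: "\<not> ?thesis"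
  have small_A: "A a Q M c c \<le> \<theta> / (8 * real Q)" if "c \<in> {0..Q - 1}" for c
    using fails that by (meson linorder_not_le less_imp_le)
  have small_A': "- A a (Q - 1) M' (d + 1) d \<le> \<theta> / (8 * real Q)" if "d \<in> {0..Q - 2}" for d
    using fails that by (meson linorder_not_le less_imp_le)
  have "0 < real N * \<theta>"
    using small zero_le_power[of "real Q" 2] by linarith
  then have "0 \<le> \<theta>" by (simp add: zero_less_mult_iff)
  have scale: "x * T \<le> real N * \<theta> / 8" if "0 \<le> x" "x \<le> real N" "T \<le> \<theta> / 8" for x T
  proof -
    have "x * T \<le> x * (\<theta> / 8)" using that by (intro mult_left_mono)
    also have "\<dots> \<le> real N * (\<theta> / 8)" using that \<open>0 \<le> \<theta>\<close> by (simp add: mult_right_mono)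
    finally show ?thesis by simp
  qed
  have QM: "real Q * real M \<le> real N" "real (Q - 1) * real M' \<le> real N"
  proof -
    have "Q * M \<le> N" "(Q - 1) * M' \<le> Q * M"
      unfolding M_def M'_def by simp_all
    then show "real Q * real M \<le> real N" "real (Q - 1) * real M' \<le> real N"
      by (simp_all flip: of_nat_mult)
  qed
  have "(\<Sum>c\<in>{0..Q - 1}. A a Q M c c) \<le> real Q * (\<theta> / (8 * real Q))"
    using sum_bounded_above[of "{0..Q - 1}", OF small_A] assms(1) by simp
  then have first: "real Q * real M * (\<Sum>c\<in>{0..Q - 1}. A a Q M c c) \<le> real N * \<theta> / 8"
    using assms(1) QM by (intro scale) auto
  have "(\<Sum>d\<in>{0..Q - 2}. - A a (Q - 1) M' (d + 1) d) \<le> real (Q - 1) * (\<theta> / (8 * real Q))"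
    using sum_bounded_above[of "{0..Q - 2}", OF small_A'] assms(1) by simp
  also have "\<dots> \<le> \<theta> / 8"
    using assms(1) \<open>0 \<le> \<theta>\<close> by (simp add: field_simps)
  finally have second: "real (Q - 1) * real M' * - (\<Sum>d\<in>{0..Q - 2}. A a (Q - 1) M' (d + 1) d)
      \<le> real N * \<theta> / 8"
    using QM by (intro scale) (auto simp: sum_negf)
  show False
    using diagonal_sums_lower_bound[OF assms(1,2) abound] first second small dense
    unfolding M_def M'_def by linarith
qed

lemma square_lt_of_fourth_power_lt:
  fixes Q N :: nat
  assumes "Q ^ 4 < 3 * N" and "48 \<le> real N * \<theta> ^ 2" and "0 < \<theta>"
  shows "real Q ^ 2 < real N * \<theta> / 4"
proof -
  have "(real Q ^ 2) ^ 2 < 3 * real N"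
    using assms(1) by (simp flip: power_mult of_nat_power)
  also have "\<dots> \<le> (real N * \<theta> / 4) ^ 2"
    using mult_left_mono[OF assms(2), of "real N"] by (simp add: power2_eq_square mult_ac)
  finally have "(real Q ^ 2) ^ 2 < (real N * \<theta> / 4) ^ 2" .
  then show ?thesis
    by (rule power_less_imp_less_base) (use assms(3) in simp)
qed

lemma lacunary_scale_bounds:
  fixes q :: "nat \<Rightarrow> nat"
  assumes "2 \<le> q 1" and "\<forall>k\<ge>1. q k < q (k + 1)" and "\<forall>k\<ge>1. q (k + 1) > q k ^ 4 + 3 * q k"
    and "1 \<le> m" and "real (q (m + 1)) / 3 \<le> real N"
  shows "2 \<le> q m" and "q m ^ 4 + 3 * q m < 3 * N"
proof -
  have "q 1 \<le> q m"
    using \<open>1 \<le> m\<close> by (induction rule: dec_induct) (use assms(2) in \<open>auto intro: order.trans less_imp_le\<close>)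
  then show "2 \<le> q m" using assms(1) by simp
  have "real (q (m + 1)) \<le> real (3 * N)" using assms(5) by simp
  then show "q m ^ 4 + 3 * q m < 3 * N"
    using assms(3,4) by (simp only: of_nat_le_iff) (meson order.strict_trans2)
qed

theorem mainTheorem8:
  fixes q :: "nat \<Rightarrow> nat" and a :: "nat \<Rightarrow> real" and N :: "nat \<Rightarrow> nat" and \<theta> :: real
  assumes q1: "2 \<le> q 1"
    and qinc: "\<forall>k\<ge>1. q k < q (k + 1)"
    and qgrow: "\<forall>k\<ge>1. q (k + 1) > (q k) ^ 4 + 3 * q k"
    and abound: "\<forall>n\<ge>1. \<bar>a n\<bar> \<le> 1"
    and Nmono: "strict_mono N"
    and Nlim: "(\<lambda>j. (\<Sum>n = 1..N j. \<bar>a n\<bar>) / real (N j)) \<longlonglongrightarrow> \<theta>"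
    and thpos: "\<theta> > 0"
  shows "\<forall>\<^sub>F j in sequentially. \<forall>m\<ge>1.
           real (q (m + 1)) / 3 \<le> real (N j) \<and> real (N j) < real (q (m + 2)) / 3 \<longrightarrow>
           (let Q = q m; M = N j div Q; M' = (Q * M) div (Q - 1) in
             (\<exists>c\<in>{0..Q - 1}. A a Q M c c \<ge> \<theta> / (8 * real Q)) \<or>
             (\<exists>d\<in>{0..Q - 2}. - A a (Q - 1) M' (d + 1) d \<ge> \<theta> / (8 * real Q)))"
proof -
  have "filterlim (\<lambda>j. real (N j)) at_top sequentially"
    by (rule filterlim_compose[OF filterlim_real_sequentially filterlim_subseq[OF Nmono]])
  then have "\<forall>\<^sub>F j in sequentially. 48 / \<theta> ^ 2 \<le> real (N j)"
    by (simp add: filterlim_at_top)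
  moreover have "\<forall>\<^sub>F j in sequentially. \<theta> / 2 < (\<Sum>n = 1..N j. \<bar>a n\<bar>) / real (N j)"
    using Nlim thpos by (intro order_tendstoD(1)) auto
  ultimately show ?thesis
  proof eventually_elim
    case (elim j)
    show ?case
    proof (intro allI impI)
      fix m assume "1 \<le> m" and "real (q (m + 1)) / 3 \<le> real (N j) \<and> real (N j) < real (q (m + 2)) / 3"
      then have "2 \<le> q m" and "q m ^ 4 + 3 * q m < 3 * N j"
        using lacunary_scale_bounds[OF q1 qinc qgrow] by auto
      then have "q m \<le> N j" "q m ^ 4 < 3 * N j" by linarith+
      then have "0 < real (N j)" using \<open>2 \<le> q m\<close> by simp
      have "48 \<le> real (N j) * \<theta> ^ 2" using elim thpos by (simp add: field_simps)
      then have small: "real (q m) ^ 2 < real (N j) * \<theta> / 4"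
        using square_lt_of_fourth_power_lt \<open>q m ^ 4 < 3 * N j\<close> thpos by blast
      have dense: "real (N j) * \<theta> / 2 < (\<Sum>n = 1..N j. \<bar>a n\<bar>)"
        using elim \<open>0 < real (N j)\<close> by (simp add: field_simps)
      show "let Q = q m; M = N j div Q; M' = Q * M div (Q - 1) in
          (\<exists>c\<in>{0..Q - 1}. \<theta> / (8 * real Q) \<le> A a Q M c c) \<or>
          (\<exists>d\<in>{0..Q - 2}. \<theta> / (8 * real Q) \<le> - A a (Q - 1) M' (d + 1) d)"
        unfolding Let_def
        by (rule diagonal_averages_dichotomy[OF \<open>2 \<le> q m\<close> \<open>q m \<le> N j\<close> abound small dense])
    qed
  qed
qed

end
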